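(* Let $P\subset\mathbb{R}^N$ be a polytope with vertex set $\{v_1,\dots,v_M\}$, and let $v:\mathbb{R}^N\to\{v_1,\dots,v_M\}$ assign to each $x$ a vertex of $P$ closest to $x$ in Euclidean norm (with some fixed tie-breaking rule). For a vertex $v_i$ let $C_1(v_i)$ denote the set of unit outward normals of supporting hyperplanes of $P$ at $v_i$, i.e. $C_1(v_i)=\{u\in\mathbb{R}^N:\|u\|=1,\ u\cdot(p-v_i)\le 0\ \text{for all } p\in P\}$. Then for each $\varepsilon>0$ there exists $D>0$ such that whenever $\|x\|>D$, $$d\Big(\frac{x}{\|x\|},\,C_1(v(x))\Big)<\varepsilon.$$
   Context: $d$ denotes Euclidean distance between a point and a set. *)

theory Defs
  imports "HOL-Analysis.Analysis"
begin

definition unit_normal_cone :: "'a::euclidean_space set \<Rightarrow> 'a \<Rightarrow> 'a set" where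
  "unit_normal_cone P w = {u. norm u = 1 \<and> (\<forall>p\<in>P. inner u (p - w) \<le> 0)}"

end

theory Submission
  imports Defs
begin

text \<open>Since \<open>v x\<close> is a nearest vertex, expanding \<open>|x - v x|\<^sup>2 \<le> |x - w|\<^sup>2\<close> gives
  \<open>(x / |x|) \<bullet> (w - v x) \<le> |w|\<^sup>2 / (2|x|)\<close> for every vertex \<open>w\<close>, so far from the origin the
  direction \<open>x / |x|\<close> almost satisfies the finitely many linear inequalities
  \<open>u \<bullet> (w - v x) \<le> 0\<close> that cut out the normal cone at \<open>v x\<close> of \<open>P\<close>, the convex hull of its
  vertices. By compactness of the unit sphere, almost satisfying them forces being close to the
  cone.\<close>

lemma nearest_point_inner_le:
  fixes x w w' :: "'a::real_inner"
  assumes "dist x w \<le> dist x w'"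
  shows "2 * inner x (w' - w) \<le> norm w' ^ 2"
proof -
  have "norm (x - w) ^ 2 \<le> norm (x - w') ^ 2"
    using assms by (simp add: dist_norm power_mono)
  then have "2 * inner x (w' - w) \<le> norm w' ^ 2 - norm w ^ 2"
    by (simp add: power2_norm_eq_inner inner_diff inner_commute algebra_simps)
  then show ?thesis
    using zero_le_power2[of "norm w"] by linarith
qed

lemma unit_normal_cone_convex_hull:
  fixes V :: "'a::euclidean_space set"
  shows "unit_normal_cone (convex hull V) w = {u. norm u = 1 \<and> (\<forall>p\<in>V. inner u (p - w) \<le> 0)}"
proof -
  have "(\<forall>p\<in>convex hull V. inner u (p - w) \<le> 0) \<longleftrightarrow> (\<forall>p\<in>V. inner u (p - w) \<le> 0)" for u
  proof
    assume "\<forall>p\<in>V. inner u (p - w) \<le> 0"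
    then have "V \<subseteq> {p. inner u p \<le> inner u w}"
      by (auto simp: inner_diff_right)
    then have "convex hull V \<subseteq> {p. inner u p \<le> inner u w}"
      by (intro hull_minimal convex_halfspace_le)
    then show "\<forall>p\<in>convex hull V. inner u (p - w) \<le> 0"
      by (auto simp: inner_diff_right)
  qed (meson hull_inc)
  then show ?thesis
    by (simp add: unit_normal_cone_def)
qed

lemma compact_continuous_pos_bounded_below:
  fixes g :: "'a::topological_space \<Rightarrow> real"
  assumes "compact A" "continuous_on A g" "\<And>y. y \<in> A \<Longrightarrow> g y > 0"
  shows "\<exists>m>0. \<forall>y\<in>A. m \<le> g y"
proof (cases "A = {}")
  case False
  then obtain y0 where "y0 \<in> A" "\<And>y. y \<in> A \<Longrightarrow> g y0 \<le> g y"
    using continuous_attains_inf[OF assms(1) _ assms(2)] by blast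
  then show ?thesis
    using assms(3) by blast
qed (auto intro: exI[of _ 1])

text \<open>The positive parts of the constraints add up to a continuous function vanishing exactly on
  the unit normal cone; it is bounded below on the compact set of unit vectors at distance
  \<open>\<ge> \<epsilon>\<close> from the cone.\<close>

lemma infdist_unit_normal_cone_convex_hull_lt:
  fixes V :: "'a::euclidean_space set"
  assumes "finite V" "\<epsilon> > 0"
  obtains \<delta> where "\<delta> > 0"
    "\<And>u. norm u = 1 \<Longrightarrow> (\<And>p. p \<in> V \<Longrightarrow> inner u (p - w) \<le> \<delta>) \<Longrightarrow>
       infdist u (unit_normal_cone (convex hull V) w) < \<epsilon>"
proof -
  define C where "C = unit_normal_cone (convex hull V) w"
  define A where "A = sphere 0 1 \<inter> {u. \<epsilon> \<le> infdist u C}"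
  define g where "g u = (\<Sum>p\<in>V. max 0 (inner u (p - w)))" for u :: 'a
  have "compact A"
    unfolding A_def
    by (intro compact_Int_closed compact_sphere closed_Collect_le continuous_intros
        continuous_on_infdist)
  moreover have "continuous_on A g"
    unfolding g_def by (intro continuous_intros)
  moreover have "g u > 0" if "u \<in> A" for u
  proof (rule ccontr)
    assume "\<not> g u > 0"
    moreover have "g u \<ge> 0"
      unfolding g_def by (simp add: sum_nonneg)
    ultimately have "g u = 0"
      by simp
    then have "\<forall>p\<in>V. max 0 (inner u (p - w)) = 0"
      unfolding g_def by (simp add: sum_nonneg_eq_0_iff[OF assms(1)])
    then have "\<forall>p\<in>V. inner u (p - w) \<le> 0"
      by (metis max.absorb_iff1)
    then have "u \<in> C"
      using that unfolding A_def C_def unit_normal_cone_convex_hull by simp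
    then show False
      using that assms(2) unfolding A_def by simp
  qed
  ultimately obtain m where "m > 0" and m: "\<And>u. u \<in> A \<Longrightarrow> m \<le> g u"
    using compact_continuous_pos_bounded_below[of A g] by blast
  show thesis
  proof (rule that)
    show "m / (card V + 1) > 0"
      using \<open>m > 0\<close> by simp
  next
    fix u :: 'a
    assume "norm u = 1" and small: "\<And>p. p \<in> V \<Longrightarrow> inner u (p - w) \<le> m / (card V + 1)"
    have "g u \<le> (\<Sum>p\<in>V. m / (card V + 1))"
      unfolding g_def using \<open>m > 0\<close> small by (intro sum_mono) simp
    also have "\<dots> < m"
      using \<open>m > 0\<close> by (simp add: field_simps)
    finally have "u \<notin> A"
      using m by force
    then show "infdist u (unit_normal_cone (convex hull V) w) < \<epsilon>"
      using \<open>norm u = 1\<close> unfolding A_def C_def by auto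
  qed
qed

lemma eventually_at_infinity_infdist_sgn_unit_normal_cone_lt:
  fixes V :: "'a::euclidean_space set"
  assumes "finite V" "\<epsilon> > 0"
  shows "\<forall>\<^sub>F x in at_infinity. (\<forall>p\<in>V. dist x w \<le> dist x p) \<longrightarrow>
           infdist (sgn x) (unit_normal_cone (convex hull V) w) < \<epsilon>"
proof -
  obtain \<delta> where "\<delta> > 0" and \<delta>:
    "\<And>u. norm u = 1 \<Longrightarrow> (\<And>p. p \<in> V \<Longrightarrow> inner u (p - w) \<le> \<delta>) \<Longrightarrow>
       infdist u (unit_normal_cone (convex hull V) w) < \<epsilon>"
    using infdist_unit_normal_cone_convex_hull_lt[OF assms] by blast
  define R where "R = (\<Sum>p\<in>V. norm p ^ 2)"
  have R: "norm p ^ 2 \<le> R" if "p \<in> V" for p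
    unfolding R_def using assms(1) that by (intro member_le_sum) auto
  show ?thesis
    unfolding eventually_at_infinity
  proof (intro exI[of _ "max 1 (R / \<delta>)"] impI allI)
    fix x :: 'a
    assume x: "max 1 (R / \<delta>) \<le> norm x" and nearest: "\<forall>p\<in>V. dist x w \<le> dist x p"
    then have "norm x > 0"
      by linarith
    have "inner (sgn x) (p - w) \<le> \<delta>" if "p \<in> V" for p
    proof -
      have "2 * inner x (p - w) \<le> norm p ^ 2"
        using nearest_point_inner_le nearest that by blast
      then have "inner x (p - w) \<le> R"
        using R[OF that] zero_le_power2[of "norm p"] by linarith
      have "inner (sgn x) (p - w) = inner x (p - w) / norm x"
        by (simp add: sgn_div_norm divide_inverse_commute)
      also have "\<dots> \<le> R / norm x"
        using \<open>inner x (p - w) \<le> R\<close> by (simp add: divide_right_mono)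
      also have "\<dots> \<le> \<delta>"
        using x \<open>\<delta> > 0\<close> \<open>norm x > 0\<close> by (simp add: field_simps)
      finally show ?thesis .
    qed
    then show "infdist (sgn x) (unit_normal_cone (convex hull V) w) < \<epsilon>"
      using \<delta> \<open>norm x > 0\<close> by (simp add: norm_sgn)
  qed
qed

theorem proposition3p1:
  fixes P :: "'a::euclidean_space set" and S :: "'a set" and v :: "'a \<Rightarrow> 'a" and \<epsilon> :: real
  assumes "finite S" and "S \<noteq> {}" and "P = convex hull S"
    and "\<And>x. v x \<in> {w. w extreme_point_of P}"
    and "\<And>x w. w extreme_point_of P \<Longrightarrow> dist x (v x) \<le> dist x w"
    and "\<epsilon> > 0"
  shows "\<exists>D>0. \<forall>x. norm x > D \<longrightarrow>
           infdist (x /\<^sub>R norm x) (unit_normal_cone P (v x)) < \<epsilon>"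
proof -
  define V where "V = {w. w extreme_point_of P}"
  have "V \<subseteq> S"
    unfolding V_def assms(3) using extreme_point_of_convex_hull by blast
  then have "finite V"
    using assms(1) by (rule finite_subset)
  have "P = convex hull V"
    unfolding V_def using assms(1,3)
    by (intro Krein_Milman_Minkowski) (simp_all add: compact_convex_hull finite_imp_compact)
  have "\<forall>\<^sub>F x in at_infinity. \<forall>w\<in>V. (\<forall>p\<in>V. dist x w \<le> dist x p) \<longrightarrow>
          infdist (sgn x) (unit_normal_cone P w) < \<epsilon>"
    unfolding \<open>P = convex hull V\<close>
    using eventually_at_infinity_infdist_sgn_unit_normal_cone_lt[OF \<open>finite V\<close> assms(6)]
    by (simp add: eventually_ball_finite \<open>finite V\<close>)
  then obtain b where b: "\<And>x. b \<le> norm x \<Longrightarrow> \<forall>w\<in>V. (\<forall>p\<in>V. dist x w \<le> dist x p) \<longrightarrow>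
          infdist (sgn x) (unit_normal_cone P w) < \<epsilon>"
    unfolding eventually_at_infinity by blast
  show ?thesis
  proof (intro exI[of _ "max 1 b"] conjI allI impI)
    fix x :: 'a
    assume "norm x > max 1 b"
    moreover have "v x \<in> V" "\<forall>p\<in>V. dist x (v x) \<le> dist x p"
      using assms(4,5) unfolding V_def by auto
    ultimately show "infdist (x /\<^sub>R norm x) (unit_normal_cone P (v x)) < \<epsilon>"
      using b[of x] by (simp add: sgn_div_norm)
  qed simp
qed

end
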